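(* Let $A$ be an infinite set and $k\in\mathbb{N}$. Then the $k$-truncated powerset lattice $\mathcal{P}_k(A)$ is $\Theta(n^k)$.
   Context: The lattice $\mathcal{P}_k(A)$ consists of all subsets of $A$ of cardinality at most $k$, ordered by inclusion, together with an adjoined greatest element $\top$ (so the join of two sets is their union if it has at most $k$ elements, and $\top$ otherwise; the least element is $\emptyset$). For a lattice $\mathcal{L}$ with least upper bounds $\bigsqcup$ of finite sets ($\bigsqcup\emptyset=\bot$), the closure set of finite $S\subseteq\mathcal{L}$ is $C(S)=\{\bigsqcup S' : S'\subseteq S\}$, and $CS_{\mathcal{L}}(n)=\max\{|C(S)| : S\subseteq\mathcal{L}\text{ finite}, |S|\le n\}$. For $f,g:\mathbb{N}\to\mathbb{N}$, $f$ is $O(g)$ (resp. $\Omega(g)$) iff there exist $N_0\in\mathbb{N}$ and rational $C>0$ with $f(n)\le Cg(n)$ (resp. $\ge$) for all $n\ge N_0$; $\Theta$ means both. A lattice is $\Theta(f(n))$ iff its $CS$ is. *)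

theory Defs
  imports Complex_Main
begin

text \<open>Generic closure sets for a lattice given by a carrier L and a function lub
  computing least upper bounds of finite subsets (lub {} = bottom).\<close>

definition closure_set :: "('b set \<Rightarrow> 'b) \<Rightarrow> 'b set \<Rightarrow> 'b set" where
  "closure_set lub S = {lub S' | S'. S' \<subseteq> S}"

definition CS :: "'b set \<Rightarrow> ('b set \<Rightarrow> 'b) \<Rightarrow> nat \<Rightarrow> nat" where
  "CS L lub n = Max {card (closure_set lub S) | S. S \<subseteq> L \<and> finite S \<and> card S \<le> n}"

text \<open>The k-truncated powerset lattice P_k(A): elements Some X with X a subset of A of
  cardinality at most k, plus the adjoined top element None.\<close>

definition Pk :: "'a set \<Rightarrow> nat \<Rightarrow> 'a set option set" where
  "Pk A k = {Some X | X. X \<subseteq> A \<and> finite X \<and> card X \<le> k} \<union> {None}"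

definition Pk_lub :: "nat \<Rightarrow> 'a set option set \<Rightarrow> 'a set option" where
  "Pk_lub k S' = (if None \<in> S' then None
     else (let U = \<Union> (the ` S') in if finite U \<and> card U \<le> k then Some U else None))"

definition bigO :: "(nat \<Rightarrow> nat) \<Rightarrow> (nat \<Rightarrow> nat) \<Rightarrow> bool" where
  "bigO f g \<longleftrightarrow> (\<exists>N0::nat. \<exists>C::rat. C > 0 \<and> (\<forall>n\<ge>N0. of_nat (f n) \<le> C * of_nat (g n)))"

definition bigOmega :: "(nat \<Rightarrow> nat) \<Rightarrow> (nat \<Rightarrow> nat) \<Rightarrow> bool" where
  "bigOmega f g \<longleftrightarrow> (\<exists>N0::nat. \<exists>C::rat. C > 0 \<and> (\<forall>n\<ge>N0. of_nat (f n) \<ge> C * of_nat (g n)))"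

definition bigTheta :: "(nat \<Rightarrow> nat) \<Rightarrow> (nat \<Rightarrow> nat) \<Rightarrow> bool" where
  "bigTheta f g \<longleftrightarrow> bigO f g \<and> bigOmega f g"

end

(* Every join other than the top is a set U of at most k points, and choosing for each point
   one generator containing it shows that U is already the join of at most k generators; hence a
   set of n generators has at most 1 + (n + 1)^k joins.  Conversely, n singletons of the infinite
   set A have all (n choose k) \<ge> (n / k)^k of their k-element unions as joins. *)

theory Submission
  imports Defs
begin

lemma closure_set_eq_image_Pow: "closure_set lub S = lub ` Pow S"
  by (auto simp: closure_set_def)

lemma card_closure_set_le_exp:
  assumes "finite S"
  shows "card (closure_set lub S) \<le> 2 ^ card S"
  unfolding closure_set_eq_image_Pow
  using card_image_le[of "Pow S" lub] assms by (simp add: card_Pow)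

lemma finite_CS_values:
  "finite {card (closure_set lub S) | S. S \<subseteq> L \<and> finite S \<and> card S \<le> n}"
proof (rule finite_subset)
  have "card (closure_set lub S) \<le> 2 ^ n" if "finite S" "card S \<le> n" for S :: "'a set"
    using that order_trans[OF card_closure_set_le_exp power_increasing] by simp
  then show "{card (closure_set lub S) | S. S \<subseteq> L \<and> finite S \<and> card S \<le> n} \<subseteq> {..2 ^ n}"
    by auto
qed simp

lemma card_closure_set_le_CS:
  assumes "S \<subseteq> L" "finite S" "card S \<le> n"
  shows "card (closure_set lub S) \<le> CS L lub n"
  unfolding CS_def using assms by (intro Max_ge[OF finite_CS_values]) blast

lemma CS_le:
  assumes "\<And>S. S \<subseteq> L \<Longrightarrow> finite S \<Longrightarrow> card S \<le> n \<Longrightarrow> card (closure_set lub S) \<le> b"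
  shows "CS L lub n \<le> b"
  unfolding CS_def
proof (rule Max.boundedI[OF finite_CS_values])
  show "{card (closure_set lub S) | S. S \<subseteq> L \<and> finite S \<and> card S \<le> n} \<noteq> {}"
    by (intro ex_in_conv[THEN iffD1] exI[of _ "card (closure_set lub {})"]) auto
qed (use assms in blast)

lemma card_subsets_card_le:
  assumes "finite S"
  shows "card {T. T \<subseteq> S \<and> card T \<le> k} \<le> (card S + 1) ^ k"
proof (induction k)
  case 0
  have "{T. T \<subseteq> S \<and> card T \<le> 0} = {{}}"
    using assms by (auto dest: finite_subset)
  then show ?case by simp
next
  case (Suc k)
  define small where "small = {T. T \<subseteq> S \<and> card T \<le> k}"
  have fin: "finite small"
    unfolding small_def using assms by (auto intro: finite_subset[of _ "Pow S"])
  have "{T. T \<subseteq> S \<and> card T \<le> Suc k} \<subseteq> (\<lambda>(x, T). insert x T) ` (S \<times> small) \<union> small"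
  proof (rule subsetI, rule UnCI)
    fix T assume "T \<in> {T. T \<subseteq> S \<and> card T \<le> Suc k}" "T \<notin> small"
    then have T: "T \<subseteq> S" "card T \<le> Suc k" "T \<notin> small" by simp_all
    then have "T \<noteq> {}" using small_def by auto
    then obtain x where x: "x \<in> T" by blast
    have "card (T - {x}) \<le> k"
      using T x finite_subset[OF T(1) assms] by simp
    then have "(x, T - {x}) \<in> S \<times> small" using T x small_def by auto
    then show "T \<in> (\<lambda>(x, T). insert x T) ` (S \<times> small)"
      using x by (intro image_eqI[where x = "(x, T - {x})"]) auto
  qed
  moreover have "finite ((\<lambda>(x, T). insert x T) ` (S \<times> small) \<union> small)"
    using fin assms by simp
  ultimately have "card {T. T \<subseteq> S \<and> card T \<le> Suc k}
      \<le> card ((\<lambda>(x, T). insert x T) ` (S \<times> small) \<union> small)"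
    by (intro card_mono)
  also have "\<dots> \<le> card ((\<lambda>(x, T). insert x T) ` (S \<times> small)) + card small"
    by (rule card_Un_le)
  also have "\<dots> \<le> card S * card small + card small"
    using card_image_le[of "S \<times> small"] fin assms by (simp add: card_cartesian_product)
  also have "\<dots> = (card S + 1) * card small" by simp
  also have "\<dots> \<le> (card S + 1) * (card S + 1) ^ k"
    unfolding small_def using Suc.IH by (rule mult_left_mono) simp
  also have "\<dots> = (card S + 1) ^ Suc k" by simp
  finally show ?case .
qed

lemma Some_singleton_mem_Pk: "a \<in> A \<Longrightarrow> 0 < k \<Longrightarrow> Some {a} \<in> Pk A k"
  unfolding Pk_def by (intro UnI1 CollectI exI[of _ "{a}"]) simp

lemma Pk_lub_singletons:
  assumes "finite X" "card X \<le> k"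
  shows "Pk_lub k ((\<lambda>a. Some {a}) ` X) = Some X"
  using assms by (auto simp: Pk_lub_def image_image)

lemma Pk_lub_eq_Some_small_subset:
  assumes "Pk_lub k S' = Some U"
  shows "\<exists>T\<subseteq>S'. card T \<le> k \<and> Pk_lub k T = Some U"
proof -
  from assms have top: "None \<notin> S'" and U: "U = \<Union> (the ` S')" "finite U" "card U \<le> k"
    by (auto simp: Pk_lub_def Let_def split: if_splits)
  then obtain cover where cover: "\<forall>x\<in>U. cover x \<in> S' \<and> x \<in> the (cover x)"
    by (metis UN_E)
  have "\<Union> (the ` cover ` U) = U" using cover U(1) by auto
  moreover have "None \<notin> cover ` U" using cover top by auto
  ultimately have "Pk_lub k (cover ` U) = Some U" using U by (simp add: Pk_lub_def)
  moreover have "card (cover ` U) \<le> k" using order_trans[OF card_image_le[OF U(2)] U(3)] .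
  ultimately show ?thesis using cover by blast
qed

lemma card_closure_set_Pk_le:
  assumes "finite S"
  shows "card (closure_set (Pk_lub k) S) \<le> 1 + (card S + 1) ^ k"
proof -
  define small where "small = {T. T \<subseteq> S \<and> card T \<le> k}"
  have fin: "finite small"
    unfolding small_def using assms by (auto intro: finite_subset[of _ "Pow S"])
  have "closure_set (Pk_lub k) S \<subseteq> insert None (Pk_lub k ` small)"
  proof
    fix y assume "y \<in> closure_set (Pk_lub k) S"
    then obtain S' where S': "S' \<subseteq> S" "y = Pk_lub k S'" by (auto simp: closure_set_def)
    show "y \<in> insert None (Pk_lub k ` small)"
    proof (cases y)
      case (Some U)
      then obtain T where "T \<subseteq> S'" "card T \<le> k" "y = Pk_lub k T"
        using Pk_lub_eq_Some_small_subset[of k S' U] S'(2) by auto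
      then show ?thesis using S'(1) small_def by auto
    qed simp
  qed
  moreover have "finite (insert None (Pk_lub k ` small))" using fin by simp
  ultimately have "card (closure_set (Pk_lub k) S) \<le> card (insert None (Pk_lub k ` small))"
    by (rule card_mono[rotated])
  also have "\<dots> \<le> 1 + card (Pk_lub k ` small)"
    using fin by (simp add: card_insert_if)
  also have "\<dots> \<le> 1 + card small"
    using card_image_le[OF fin] by simp
  also have "\<dots> \<le> 1 + (card S + 1) ^ k"
    using card_subsets_card_le[OF assms] small_def by simp
  finally show ?thesis .
qed

lemma CS_Pk_le: "CS (Pk A k) (Pk_lub k) n \<le> 1 + (n + 1) ^ k"
proof (rule CS_le)
  fix S :: "'a set option set" assume "finite S" "card S \<le> n"
  then show "card (closure_set (Pk_lub k) S) \<le> 1 + (n + 1) ^ k"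
    using card_closure_set_Pk_le[of S k] power_mono[of "card S + 1" "n + 1" k] by simp
qed

lemma binomial_le_card_closure_set_singletons:
  assumes "finite B"
  shows "card B choose k \<le> card (closure_set (Pk_lub k) ((\<lambda>a. Some {a}) ` B))"
proof -
  have "Some ` {X. X \<subseteq> B \<and> card X = k} \<subseteq> closure_set (Pk_lub k) ((\<lambda>a. Some {a}) ` B)"
  proof (rule image_subsetI)
    fix X assume "X \<in> {X. X \<subseteq> B \<and> card X = k}"
    then have X: "X \<subseteq> B" "card X = k" by simp_all
    then have "Some X = Pk_lub k ((\<lambda>a. Some {a}) ` X)"
      using Pk_lub_singletons[of X k] finite_subset[OF _ assms] by simp
    moreover have "(\<lambda>a. Some {a}) ` X \<subseteq> (\<lambda>a. Some {a}) ` B" using X by auto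
    ultimately
    show "Some X \<in> closure_set (Pk_lub k) ((\<lambda>a. Some {a}) ` B)"
      unfolding closure_set_def by blast
  qed
  then have "card (Some ` {X. X \<subseteq> B \<and> card X = k})
      \<le> card (closure_set (Pk_lub k) ((\<lambda>a. Some {a}) ` B))"
    using assms by (intro card_mono) (simp_all add: closure_set_eq_image_Pow)
  then show ?thesis using n_subsets[OF assms] by (simp add: card_image)
qed

lemma binomial_le_CS_Pk:
  assumes "infinite A"
  shows "n choose k \<le> CS (Pk A k) (Pk_lub k) n"
proof (cases "k = 0")
  case True
  then show ?thesis
    using card_closure_set_le_CS[of "{}" "Pk A k" n "Pk_lub k"] by (simp add: closure_set_eq_image_Pow)
next
  case False
  obtain B where B: "finite B" "card B = n" "B \<subseteq> A"
    using infinite_arbitrarily_large[OF assms] by blast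
  have "(\<lambda>a. Some {a}) ` B \<subseteq> Pk A k" using B(3) False Some_singleton_mem_Pk[of _ A k] by auto
  moreover have "card ((\<lambda>a. Some {a}) ` B) \<le> n"
    using card_image_le[OF B(1), of "\<lambda>a. Some {a}"] B(2) by simp
  ultimately have "card (closure_set (Pk_lub k) ((\<lambda>a. Some {a}) ` B)) \<le> CS (Pk A k) (Pk_lub k) n"
    using B(1) by (intro card_closure_set_le_CS) simp_all
  then show ?thesis
    using binomial_le_card_closure_set_singletons[OF B(1), of k] B(2) by simp
qed

lemma bigO_pow_if_le_one_plus_Suc_pow:
  assumes "\<And>n. f n \<le> 1 + (n + 1) ^ k"
  shows "bigO f (\<lambda>n. n ^ k)"
  unfolding bigO_def
proof (intro exI conjI allI impI)
  show "(0::rat) < of_nat (2 ^ k + 1)" unfolding of_nat_0_less_iff by simp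
  fix n :: nat assume "1 \<le> n"
  then have "(n + 1) ^ k \<le> (2 * n) ^ k" "1 \<le> n ^ k" by (intro power_mono, simp_all)
  then have "f n \<le> (2 ^ k + 1) * n ^ k"
    using assms[of n] by (simp add: power_mult_distrib algebra_simps)
  then show "of_nat (f n) \<le> (of_nat (2 ^ k + 1) :: rat) * of_nat (n ^ k)"
    by (metis of_nat_le_iff of_nat_mult)
qed

lemma bigOmega_pow_if_binomial_le:
  assumes "\<And>n. n choose k \<le> f n"
  shows "bigOmega f (\<lambda>n. n ^ k)"
  unfolding bigOmega_def
proof (intro exI conjI allI impI)
  show "(0::rat) < 1 / of_nat k ^ k" by (cases "k = 0") simp_all
  fix n :: nat assume "k \<le> n"
  have "1 / of_nat k ^ k * of_nat (n ^ k) = (of_nat n / of_nat k :: rat) ^ k"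
    by (simp add: power_divide)
  also have "\<dots> \<le> of_nat (n choose k)" using binomial_ge_n_over_k_pow_k[OF \<open>k \<le> n\<close>] .
  also have "\<dots> \<le> of_nat (f n)" using assms by simp
  finally show "1 / of_nat k ^ k * of_nat (n ^ k) \<le> (of_nat (f n) :: rat)" .
qed

theorem mainTheorem7:
  fixes A :: "'a set" and k :: nat
  assumes "infinite A"
  shows "bigTheta (CS (Pk A k) (Pk_lub k)) (\<lambda>n. n ^ k)"
  unfolding bigTheta_def
  using bigO_pow_if_le_one_plus_Suc_pow[OF CS_Pk_le[of A k]]
    bigOmega_pow_if_binomial_le[OF binomial_le_CS_Pk[OF assms]]
  by blast

end
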